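(* Let $t$ be a probabilistic process term of $P_{\mathrm{PA}}$ and let $\sigma_1,\sigma_2$ be closed substitutions such that $\mathbf d(\sigma_1(x),\sigma_2(x))<1$ for every state variable $x$. Then \[ \mathbf d(\sigma_1(t),\sigma_2(t))\le \mathrm{pda}\bigl(\llbracket t\rrbracket_{\mathcal P},\mathbf d(\sigma_1,\sigma_2)\bigr). \]
   Context: Probabilistic transition systems and bisimilarity metric. A signature $\Sigma$ is a countable set of operators $f$, each with an arity $r(f)\in\mathbb N$. Fix disjoint countably infinite sets $\mathcal V_s$ of state variables and $\mathcal V_d$ of distribution variables; $\mathcal V=\mathcal V_s\cup\mathcal V_d$. Open (state) terms are built from state variables and operators; closed terms (processes) $T(\Sigma)$ contain no variables. $\Delta(T(\Sigma))$ is the set of discrete probability distributions on $T(\Sigma)$, $\delta_t$ is the Dirac distribution at $t$, and for distributions $\pi_1,\dots,\pi_{r(f)}$, $f(\pi_1,\dots,\pi_{r(f)})$ is the distribution assigning $f(t_1,\dots,t_{r(f)})$ probability $\prod_i\pi_i(t_i)$. Distribution terms are: distribution variables $\mu$, $\delta(t)$ for state terms $t$, convex combinations $\sum_{i\in I}q_i\theta_i$ ($q_i\in(0,1]$, $\sum q_i=1$), and $f(\theta_1,\dots,\theta_{r(f)})$. A closed substitution $\sigma$ maps state variables to closed terms and distribution variables to distributions; it extends homomorphically to state terms and to distribution terms via $\sigma(\delta(t))=\delta_{\sigma(t)}$, $\sigma(\sum q_i\theta_i)=\sum q_i\sigma(\theta_i)$, $\sigma(f(\theta_1,\dots))=f(\sigma(\theta_1),\dots)$.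 A PTS is $(T(\Sigma),A,\to)$ with $A$ a countable set of actions and $\to\subseteq T(\Sigma)\times A\times\Delta(T(\Sigma))$; write $t\xrightarrow{a}\pi$, and $\mathit{der}(t,a)=\{\pi\mid t\xrightarrow a\pi\}$. A PGSOS rule has the form $\dfrac{\{x_i\xrightarrow{a_{i,m}}\mu_{i,m}\mid i\in I,m\in M_i\}\ \ \{x_i\not\xrightarrow{b_{i,n}}\mid i\in I,n\in N_i\}}{f(x_1,\dots,x_{r(f)})\xrightarrow{a}\theta}$ with $I=\{1,\dots,r(f)\}$, finite $M_i,N_i$, pairwise distinct $x_i\in\mathcal V_s$, pairwise distinct $\mu_{i,m}\in\mathcal V_d$, and $\theta$ a distribution term whose variables are among the $x_i$ and $\mu_{i,m}$. A PTSS $(\Sigma,A,R)$ with $R$ a countable set of PGSOS rules determines a unique supported model: $t\xrightarrow a\pi$ iff for some rule and closed substitution $\sigma$, $\sigma(x_i)\xrightarrow{a_{i,m}}\sigma(\mu_{i,m})$ for all positive premises, $\sigma(x_i)$ has no $b_{i,n}$-transition for all negative premises, $\sigma(f(x_1,\dots))=t$ and $\sigma(\theta)=\pi$. For $d:T(\Sigma)\times T(\Sigma)\to[0,1]$, the Kantorovich lifting is $K(d)(\pi,\pi')=\min_{\omega}\sum_{t,t'}d(t,t')\omega(t,t')$ over couplings $\omega$ of $\pi,\pi'$; the Hausdorff lifting is $H(\hat d)(\Pi_1,\Pi_2)=\max\{\sup_{\pi_1\in\Pi_1}\inf_{\pi_2\in\Pi_2}\hat d(\pi_1,\pi_2),\sup_{\pi_2\in\Pi_2}\inf_{\pi_1\in\Pi_1}\hat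 d(\pi_2,\pi_1)\}$ with $\inf\emptyset=1$, $\sup\emptyset=0$. Let $B(d)(t,t')=\sup_{a\in A}H(K(d))(\mathit{der}(t,a),\mathit{der}(t',a))$. The bisimilarity metric $\mathbf d$ is the least fixed point of $B$ on $[0,1]^{T(\Sigma)\times T(\Sigma)}$ ordered pointwise. The process algebra $P_{\mathrm{PA}}$: operators are the constant $0$, for each $a\in A$, $n\ge1$, $q_1,\dots,q_n\in(0,1]$ with $\sum q_i=1$ the $n$-ary prefix $a.\bigoplus_{i=1}^n[q_i]\_$ (written $a.\_$ when $n=1$), binary $+$, and binary $\|_B$ for each $B\subseteq A$ ($\|$ denotes $\|_A$). Rules: $a.\bigoplus_{i}[q_i]x_i\xrightarrow a\sum_i q_i\delta(x_i)$; from $x_1\xrightarrow a\mu_1$ infer $x_1+x_2\xrightarrow a\mu_1$; from $x_2\xrightarrow a\mu_2$ infer $x_1+x_2\xrightarrow a\mu_2$; for $a\in B$ from $x_1\xrightarrow a\mu_1$, $x_2\xrightarrow a\mu_2$ infer $x_1\|_Bx_2\xrightarrow a\mu_1\|_B\mu_2$; for $a\notin B$ from $x_1\xrightarrow a\mu_1$ infer $x_1\|_Bx_2\xrightarrow a\mu_1\|_B\delta(x_2)$ and from $x_2\xrightarrow a\mu_2$ infer $x_1\|_Bx_2\xrightarrow a\delta(x_1)\|_B\mu_2$. Probabilistic process terms are the open terms built only from $0$, state variables, prefixes $a.\bigoplus_{i=1}^n[q_i]\_$ and $\|$. Multiplicities: $\mathcal M$ is the set of maps $m:\mathcal V\to\mathbb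 N\cup\{\infty\}$; $0$ is the zero map and $1_x$ maps $x$ to $1$ and other variables to $0$. $\mathcal P$ is the set of discrete probability distributions on $\mathcal M$. For probabilistic terms: $\llbracket0\rrbracket_{\mathcal P}=\delta_0$, $\llbracket x\rrbracket_{\mathcal P}=\delta_{1_x}$, $\llbracket t_1\|t_2\rrbracket_{\mathcal P}(m)=\sum\{\llbracket t_1\rrbracket_{\mathcal P}(m_1)\llbracket t_2\rrbracket_{\mathcal P}(m_2)\mid m_1,m_2\in\mathcal M,\ m(x)=m_1(x)+m_2(x)\ \forall x\}$, $\llbracket a.\bigoplus_{i=1}^n[q_i]t_i\rrbracket_{\mathcal P}=\sum_i q_i\llbracket t_i\rrbracket_{\mathcal P}$. $\mathcal E$ is the set of maps $e:\mathcal V\to[0,1)$. $\mathrm{dda}(m,e)=1-\prod_{x\in\mathcal V}(1-e(x))^{m(x)}$ (with $c^\infty=0$ for $0\le c<1$, $1^\infty=1$), and $\mathrm{pda}(p,e)=\sum_{m\in\mathcal M}p(m)\,\mathrm{dda}(m,e)$. For closed substitutions, $\mathbf d(\sigma_1,\sigma_2)\in\mathcal E$ is $x\mapsto\mathbf d(\sigma_1(x),\sigma_2(x))$. *)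

theory Defs
  imports "HOL-Probability.Probability" "HOL-Library.Extended_Nat"
begin

text \<open>Closed terms (processes) T(Sigma). A prefix a.(+)_i [q_i] t_i is represented by
  the list of pairs (t_i, q_i). The constructors are: 0, prefix, +, parallel composition
  with synchronisation set B.\<close>
datatype 'a proc =
    PNil
  | PPre 'a "('a proc \<times> real) list"
  | PCho "'a proc" "'a proc"
  | PPar "'a set" "'a proc" "'a proc"

datatype ('a, 'v) tm =
    TVar 'v
  | TNil
  | TPre 'a "(('a, 'v) tm \<times> real) list"
  | TCho "('a, 'v) tm" "('a, 'v) tm"
  | TPar "'a set" "('a, 'v) tm" "('a, 'v) tm"

text \<open>The prefix operator a.(+)_{i=1}^n [q_i] _ exists only for n >= 1, q_i in (0,1],
  sum q_i = 1.\<close>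
definition wf_weights :: "('x \<times> real) list \<Rightarrow> bool" where
  "wf_weights qs \<longleftrightarrow> qs \<noteq> [] \<and> (\<forall>p\<in>set qs. 0 < snd p \<and> snd p \<le> 1)
     \<and> sum_list (map snd qs) = 1"

fun wf_proc :: "'a proc \<Rightarrow> bool" where
  "wf_proc PNil = True"
| "wf_proc (PPre a qs) = (wf_weights qs \<and> (\<forall>p\<in>set qs. wf_proc (fst p)))"
| "wf_proc (PCho t u) = (wf_proc t \<and> wf_proc u)"
| "wf_proc (PPar B t u) = (wf_proc t \<and> wf_proc u)"

fun wf_tm :: "('a, 'v) tm \<Rightarrow> bool" where
  "wf_tm (TVar x) = True"
| "wf_tm TNil = True"
| "wf_tm (TPre a qs) = (wf_weights qs \<and> (\<forall>p\<in>set qs. wf_tm (fst p)))"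
| "wf_tm (TCho t u) = (wf_tm t \<and> wf_tm u)"
| "wf_tm (TPar B t u) = (wf_tm t \<and> wf_tm u)"

text \<open>Probabilistic process terms: built from 0, variables, prefixes and \<parallel> = \<parallel>_A
  (A = UNIV, the full action set).\<close>
fun ppt :: "('a, 'v) tm \<Rightarrow> bool" where
  "ppt (TVar x) = True"
| "ppt TNil = True"
| "ppt (TPre a qs) = (\<forall>p\<in>set qs. ppt (fst p))"
| "ppt (TCho t u) = False"
| "ppt (TPar B t u) = (B = UNIV \<and> ppt t \<and> ppt u)"

fun subst :: "('v \<Rightarrow> 'a proc) \<Rightarrow> ('a, 'v) tm \<Rightarrow> 'a proc" where
  "subst \<sigma> (TVar x) = \<sigma> x"
| "subst \<sigma> TNil = PNil"
| "subst \<sigma> (TPre a qs) = PPre a (map (\<lambda>p. (subst \<sigma> (fst p), snd p)) qs)"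
| "subst \<sigma> (TCho t u) = PCho (subst \<sigma> t) (subst \<sigma> u)"
| "subst \<sigma> (TPar B t u) = PPar B (subst \<sigma> t) (subst \<sigma> u)"

definition par_pmf :: "'a set \<Rightarrow> 'a proc pmf \<Rightarrow> 'a proc pmf \<Rightarrow> 'a proc pmf" where
  "par_pmf B \<mu>1 \<mu>2 = map_pmf (\<lambda>(x, y). PPar B x y) (pair_pmf \<mu>1 \<mu>2)"

inductive step :: "'a proc \<Rightarrow> 'a \<Rightarrow> 'a proc pmf \<Rightarrow> bool" where
  pre: "wf_weights qs \<Longrightarrow> step (PPre a qs) a (pmf_of_list qs)"
| cho1: "step t1 a \<mu>1 \<Longrightarrow> step (PCho t1 t2) a \<mu>1"
| cho2: "step t2 a \<mu>2 \<Longrightarrow> step (PCho t1 t2) a \<mu>2"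
| sync: "a \<in> B \<Longrightarrow> step t1 a \<mu>1 \<Longrightarrow> step t2 a \<mu>2 \<Longrightarrow>
           step (PPar B t1 t2) a (par_pmf B \<mu>1 \<mu>2)"
| left: "a \<notin> B \<Longrightarrow> step t1 a \<mu>1 \<Longrightarrow>
           step (PPar B t1 t2) a (par_pmf B \<mu>1 (return_pmf t2))"
| right: "a \<notin> B \<Longrightarrow> step t2 a \<mu>2 \<Longrightarrow>
           step (PPar B t1 t2) a (par_pmf B (return_pmf t1) \<mu>2)"

definition der :: "'a proc \<Rightarrow> 'a \<Rightarrow> 'a proc pmf set" where
  "der t a = {\<pi>. step t a \<pi>}"

definition couplings :: "'x pmf \<Rightarrow> 'x pmf \<Rightarrow> ('x \<times> 'x) pmf set" where
  "couplings \<pi> \<pi>' = {\<omega>. map_pmf fst \<omega> = \<pi> \<and> map_pmf snd \<omega> = \<pi>'}"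

text \<open>Kantorovich lifting (the minimum over couplings, written as an infimum).\<close>
definition kantorovich :: "('x \<Rightarrow> 'x \<Rightarrow> real) \<Rightarrow> 'x pmf \<Rightarrow> 'x pmf \<Rightarrow> real" where
  "kantorovich d \<pi> \<pi>' =
     (INF \<omega>\<in>couplings \<pi> \<pi>'. measure_pmf.expectation \<omega> (\<lambda>(t, t'). d t t'))"

definition inf1 :: "real set \<Rightarrow> real" where
  "inf1 S = (if S = {} then 1 else Inf S)"

definition sup0 :: "real set \<Rightarrow> real" where
  "sup0 S = (if S = {} then 0 else Sup S)"

definition hausdorff :: "('y \<Rightarrow> 'y \<Rightarrow> real) \<Rightarrow> 'y set \<Rightarrow> 'y set \<Rightarrow> real" where
  "hausdorff dh P1 P2 =
     max (sup0 ((\<lambda>p1. inf1 ((\<lambda>p2. dh p1 p2) ` P2)) ` P1))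
         (sup0 ((\<lambda>p2. inf1 ((\<lambda>p1. dh p2 p1) ` P1)) ` P2))"

definition bisim_op :: "('a proc \<Rightarrow> 'a proc \<Rightarrow> real) \<Rightarrow> 'a proc \<Rightarrow> 'a proc \<Rightarrow> real" where
  "bisim_op d t t' = sup0 ((\<lambda>a. hausdorff (kantorovich d) (der t a) (der t' a)) ` UNIV)"

definition unit_valued :: "('x \<Rightarrow> 'x \<Rightarrow> real) \<Rightarrow> bool" where
  "unit_valued d \<longleftrightarrow> (\<forall>t t'. 0 \<le> d t t' \<and> d t t' \<le> 1)"

definition bdist :: "'a proc \<Rightarrow> 'a proc \<Rightarrow> real" where
  "bdist = (THE d. unit_valued d \<and> bisim_op d = d \<and>
              (\<forall>d'. unit_valued d' \<and> bisim_op d' = d' \<longrightarrow> d \<le> d'))"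

type_synonym 'v mult = "'v \<Rightarrow> enat"

fun sem :: "('a, 'v) tm \<Rightarrow> 'v mult pmf" where
  "sem (TVar x) = return_pmf (\<lambda>y. if y = x then 1 else 0)"
| "sem TNil = return_pmf (\<lambda>_. 0)"
| "sem (TPre a qs) = bind_pmf (pmf_of_list (map (\<lambda>p. (sem (fst p), snd p)) qs)) id"
| "sem (TCho t u) = return_pmf (\<lambda>_. 0)" \<comment> \<open>not a probabilistic process term; irrelevant\<close>
| "sem (TPar B t u) =
     map_pmf (\<lambda>(m1, m2). \<lambda>x. m1 x + m2 x) (pair_pmf (sem t) (sem u))"

definition epow :: "real \<Rightarrow> enat \<Rightarrow> real" where
  "epow c m = (case m of enat n \<Rightarrow> c ^ n | \<infinity> \<Rightarrow> (if c = 1 then 1 else 0))"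

text \<open>The product over all variables of factors in [0,1] is the infimum of the finite
  partial products.\<close>
definition dda :: "'v mult \<Rightarrow> ('v \<Rightarrow> real) \<Rightarrow> real" where
  "dda m e = 1 - (INF F\<in>{F. finite F}. \<Prod>x\<in>F. epow (1 - e x) (m x))"

definition pda :: "'v mult pmf \<Rightarrow> ('v \<Rightarrow> real) \<Rightarrow> real" where
  "pda p e = measure_pmf.expectation p (\<lambda>m. dda m e)"

end

theory Submission
  imports Defs
begin

(* The bisimilarity metric bdist is the least pre-fixed point of the
   functional bisim_op on unit-valued distances, so it suffices to exhibit a
   unit-valued distance d with bisim_op d <= d that is bounded on the pair
   (subst s1 t, subst s2 t) by pda (sem t) e, e x = bdist (s1 x) (s2 x).

   Such a d is obtained from "witness trees": a witness tree is a probabilistic process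
   term (0, prefix, full parallel composition) whose leaves carry pairs of processes
   at bdist-distance < 1.  It denotes a pair of processes (its left and right reading)
   and a bound, computed from the leaf distances by weighted averages at prefixes and by
   the "noisy or"  por a b = 1 - (1 - a) * (1 - b)  at parallel compositions.  The
   distance witness_dist p q is the infimum of the bounds of all witness trees for
   (p, q).  That it is a pre-fixed point of bisim_op follows by induction on trees from
   three compositionality facts: the Kantorovich lifting is bounded by weighted sums
   on prefix distributions and by por on parallel distributions, and the Hausdorff
   lifting is bounded by por on products of derivative sets.

   Finally the tree of t under (s1, s2) has bound exactly pda (sem t) e, since
   dda turns sums of multiplicities into por and pda averages dda. *)


lemma integrable_pmf_bounded:
  "(\<And>x. \<bar>f x\<bar> \<le> (B::real)) \<Longrightarrow> integrable (measure_pmf M) f"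
  by (rule measure_pmf.integrable_const_bound[where B=B]) auto

lemma expectation_unit_range:
  assumes "\<And>x. 0 \<le> f x \<and> f x \<le> (1::real)"
  shows "0 \<le> measure_pmf.expectation M f \<and> measure_pmf.expectation M f \<le> 1"
proof
  show "0 \<le> measure_pmf.expectation M f" using assms by (simp add: integral_nonneg_AE)
  have "measure_pmf.expectation M f \<le> measure_pmf.expectation M (\<lambda>_. 1)"
    using assms by (intro integral_mono integrable_pmf_bounded[where B=1]) auto
  then show "measure_pmf.expectation M f \<le> 1" by simp
qed

lemma expectation_mono_bounded:
  assumes "\<And>x. f x \<le> g x" "\<And>x. \<bar>f x\<bar> \<le> (B::real)" "\<And>x. \<bar>g x\<bar> \<le> C"
  shows "measure_pmf.expectation M f \<le> measure_pmf.expectation M g"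
  using assms by (intro integral_mono integrable_pmf_bounded) auto

lemma expectation_one_minus:
  assumes "\<And>x. \<bar>f x\<bar> \<le> (B::real)"
  shows "measure_pmf.expectation M (\<lambda>x. 1 - f x) = 1 - measure_pmf.expectation M f"
  using assms by (subst Bochner_Integration.integral_diff) (auto intro: integrable_pmf_bounded)

lemma expectation_bind_pmf:
  fixes f :: "'b \<Rightarrow> real"
  assumes "\<And>x. \<bar>f x\<bar> \<le> B"
  shows "measure_pmf.expectation (bind_pmf M N) f
       = measure_pmf.expectation M (\<lambda>x. measure_pmf.expectation (N x) f)"
  unfolding measure_pmf_bind
  using assms measurable_measure_pmf[of N]
  by (intro integral_bind[where K="count_space UNIV" and B=B and B'=1])
     (auto simp: measure_pmf.emeasure_space_1 prob_space_imp_subprob_space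
                 measure_pmf.prob_space_axioms intro: measure_pmf.finite_measure_axioms)

lemma expectation_pair_pmf_mult:
  fixes f g :: "_ \<Rightarrow> real"
  assumes f: "\<And>x. \<bar>f x\<bar> \<le> B" and g: "\<And>y. \<bar>g y\<bar> \<le> C"
  shows "measure_pmf.expectation (pair_pmf A D) (\<lambda>(x, y). f x * g y)
       = measure_pmf.expectation A f * measure_pmf.expectation D g"
proof -
  have bound: "\<bar>(\<lambda>(x, y). f x * g y) z\<bar> \<le> B * C" for z
    using f g by (auto simp: abs_mult split: prod.splits intro!: mult_mono)
                 (meson abs_ge_zero order_trans)
  have "measure_pmf.expectation (pair_pmf A D) (\<lambda>(x, y). f x * g y)
      = measure_pmf.expectation A (\<lambda>x. measure_pmf.expectation
          (bind_pmf D (\<lambda>y. return_pmf (x, y))) (\<lambda>(x, y). f x * g y))"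
    unfolding pair_pmf_def by (rule expectation_bind_pmf[OF bound])
  also have "\<dots> = measure_pmf.expectation A (\<lambda>x. measure_pmf.expectation D (\<lambda>y. f x * g y))"
    by (intro Bochner_Integration.integral_cong refl, subst expectation_bind_pmf[OF bound]) simp
  also have "\<dots> = measure_pmf.expectation A f * measure_pmf.expectation D g"
    by simp
  finally show ?thesis .
qed

lemma map_pmf_of_list:
  assumes "pmf_of_list_wf xs"
  shows "map_pmf f (pmf_of_list xs) = pmf_of_list (map (\<lambda>p. (f (fst p), snd p)) xs)"
proof (rule pmf_eqI)
  have wf: "pmf_of_list_wf (map (\<lambda>p. (f (fst p), snd p)) xs)"
    using assms by (auto simp: pmf_of_list_wf_def comp_def)
  fix y
  show "pmf (map_pmf f (pmf_of_list xs)) y = pmf (pmf_of_list (map (\<lambda>p. (f (fst p), snd p)) xs)) y"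
    unfolding pmf_map measure_pmf_of_list[OF assms] pmf_pmf_of_list[OF wf]
    by (induction xs) auto
qed

lemma expectation_pmf_of_list:
  fixes f :: "_ \<Rightarrow> real"
  assumes "pmf_of_list_wf xs"
  shows "measure_pmf.expectation (pmf_of_list xs) f = (\<Sum>p\<leftarrow>xs. snd p * f (fst p))"
proof -
  let ?A = "set (map fst xs)"
  have "measure_pmf.expectation (pmf_of_list xs) f = (\<Sum>a\<in>?A. f a * pmf (pmf_of_list xs) a)"
    using set_pmf_of_list[OF assms] by (intro integral_measure_pmf_real) auto
  also have "\<dots> = (\<Sum>a\<in>?A. (\<Sum>i=0..<length xs. if fst (xs!i) = a then snd (xs!i) * f a else 0))"
    by (intro sum.cong refl, simp add: pmf_pmf_of_list[OF assms],
        subst sum_list_map_filter', subst sum_list_sum_nth)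
       (auto simp: sum_distrib_left intro!: sum.cong)
  also have "\<dots> = (\<Sum>i=0..<length xs. (\<Sum>a\<in>?A. if fst (xs!i) = a then snd (xs!i) * f a else 0))"
    by (rule sum.swap)
  also have "\<dots> = (\<Sum>p\<leftarrow>xs. snd p * f (fst p))"
    by (subst sum_list_sum_nth) (auto simp: sum.delta intro!: sum.cong)
  finally show ?thesis .
qed


text \<open>por a b is the probability that at least one of two independent events of
  probabilities a and b happens; it is how distances combine under parallel composition.\<close>
definition por :: "real \<Rightarrow> real \<Rightarrow> real" where
  "por a b = 1 - (1 - a) * (1 - b)"

lemma por_range: "0 \<le> a \<Longrightarrow> a \<le> 1 \<Longrightarrow> 0 \<le> b \<Longrightarrow> b \<le> 1 \<Longrightarrow> 0 \<le> por a b \<and> por a b \<le> 1"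
  by (simp add: por_def mult_le_one)

lemma por_less_one: "a < 1 \<Longrightarrow> b < 1 \<Longrightarrow> por a b < 1"
  by (simp add: por_def)

lemma por_mono: "a \<le> a' \<Longrightarrow> b \<le> b' \<Longrightarrow> a' \<le> 1 \<Longrightarrow> b' \<le> 1 \<Longrightarrow> por a b \<le> por a' b'"
  unfolding por_def by (simp add: mult_mono)

lemma expectation_pair_por:
  fixes f g :: "_ \<Rightarrow> real"
  assumes f: "\<And>x. 0 \<le> f x \<and> f x \<le> 1" and g: "\<And>y. 0 \<le> g y \<and> g y \<le> 1"
  shows "measure_pmf.expectation (pair_pmf A D) (\<lambda>(x, y). por (f x) (g y))
       = por (measure_pmf.expectation A f) (measure_pmf.expectation D g)"
proof -
  have f': "\<bar>1 - f x\<bar> \<le> 1" "\<bar>f x\<bar> \<le> 1" and g': "\<bar>1 - g y\<bar> \<le> 1" "\<bar>g y\<bar> \<le> 1" for x y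
    using f[of x] g[of y] by auto
  have "measure_pmf.expectation (pair_pmf A D) (\<lambda>(x, y). por (f x) (g y))
      = 1 - measure_pmf.expectation (pair_pmf A D) (\<lambda>(x, y). (1 - f x) * (1 - g y))"
    unfolding por_def case_prod_beta
    by (rule expectation_one_minus[where B=1]) (use f' g' in \<open>auto simp: abs_mult intro!: mult_le_one\<close>)
  also have "\<dots> = por (measure_pmf.expectation A f) (measure_pmf.expectation D g)"
  proof -
    have "measure_pmf.expectation A (\<lambda>x. 1 - f x) = 1 - measure_pmf.expectation A f"
      and "measure_pmf.expectation D (\<lambda>y. 1 - g y) = 1 - measure_pmf.expectation D g"
      by (rule expectation_one_minus, rule f'(2))+ (rule expectation_one_minus, rule g'(2))
    then show ?thesis
      unfolding expectation_pair_pmf_mult[of "\<lambda>x. 1 - f x", OF f'(1) g'(1)] por_def by simp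
  qed
  finally show ?thesis .
qed

lemma le_por_Inf:
  fixes S1 S2 :: "real set"
  assumes ne: "S1 \<noteq> {}" "S2 \<noteq> {}"
    and r1: "\<And>a. a \<in> S1 \<Longrightarrow> 0 \<le> a \<and> a \<le> 1" and r2: "\<And>b. b \<in> S2 \<Longrightarrow> 0 \<le> b \<and> b \<le> 1"
    and le: "\<And>a b. a \<in> S1 \<Longrightarrow> b \<in> S2 \<Longrightarrow> c \<le> por a b"
  shows "c \<le> por (Inf S1) (Inf S2)"
proof (rule field_le_epsilon)
  fix \<epsilon> :: real assume "0 < \<epsilon>"
  have bdd1: "bdd_below S1" and bdd2: "bdd_below S2"
    using r1 r2 by (auto intro!: bdd_belowI[where m=0])
  have I1: "0 \<le> Inf S1" and I2: "0 \<le> Inf S2"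
    using r1 r2 ne by (auto intro!: cInf_greatest)
  obtain a where a: "a \<in> S1" "a < Inf S1 + \<epsilon>/2"
    using cInf_less_iff[OF ne(1) bdd1, of "Inf S1 + \<epsilon>/2"] \<open>0 < \<epsilon>\<close> by auto
  obtain b where b: "b \<in> S2" "b < Inf S2 + \<epsilon>/2"
    using cInf_less_iff[OF ne(2) bdd2, of "Inf S2 + \<epsilon>/2"] \<open>0 < \<epsilon>\<close> by auto
  have "Inf S1 * Inf S2 \<le> a * b"
    using a b I1 I2 bdd1 bdd2 r1[OF a(1)] by (intro mult_mono) (auto intro: cInf_lower)
  then have "por a b \<le> por (Inf S1) (Inf S2) + (a - Inf S1) + (b - Inf S2)"
    by (simp add: por_def algebra_simps)
  also have "\<dots> \<le> por (Inf S1) (Inf S2) + \<epsilon>"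
    using a(2) b(2) by simp
  finally show "c \<le> por (Inf S1) (Inf S2) + \<epsilon>"
    using le[OF a(1) b(1)] by linarith
qed


lemma inf1_range:
  assumes "\<And>x. x \<in> P \<Longrightarrow> 0 \<le> f x \<and> f x \<le> 1"
  shows "0 \<le> inf1 (f ` P) \<and> inf1 (f ` P) \<le> 1"
proof (cases "P = {}")
  case False
  then obtain x where x: "x \<in> P" by blast
  have "bdd_below (f ` P)" using assms by (intro bdd_belowI2[where m=0]) auto
  then have "Inf (f ` P) \<le> f x" using x by (rule cINF_lower)
  moreover have "0 \<le> Inf (f ` P)" using False assms by (intro cINF_greatest) auto
  ultimately show ?thesis using False assms[OF x] by (simp add: inf1_def)
qed (simp add: inf1_def)

lemma sup0_range:
  assumes "\<And>x. x \<in> P \<Longrightarrow> 0 \<le> f x \<and> f x \<le> 1"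
  shows "0 \<le> sup0 (f ` P) \<and> sup0 (f ` P) \<le> 1"
proof (cases "P = {}")
  case False
  then obtain x where x: "x \<in> P" by blast
  have "bdd_above (f ` P)" using assms by (intro bdd_aboveI2[where M=1]) auto
  then have "f x \<le> Sup (f ` P)" using x by (intro cSUP_upper)
  moreover have "Sup (f ` P) \<le> 1" using False assms by (intro cSUP_least) auto
  ultimately show ?thesis using False assms[OF x] by (simp add: sup0_def)
qed (simp add: sup0_def)

lemma inf1_mono:
  "(\<And>x. x \<in> P \<Longrightarrow> 0 \<le> f x \<and> f x \<le> g x) \<Longrightarrow> inf1 (f ` P) \<le> inf1 (g ` P)"
  unfolding inf1_def by (auto intro!: cINF_mono bdd_belowI2[where m=0])

lemma sup0_mono:
  "(\<And>x. x \<in> P \<Longrightarrow> f x \<le> g x \<and> g x \<le> 1) \<Longrightarrow> sup0 (f ` P) \<le> sup0 (g ` P)"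
  unfolding sup0_def by (auto intro!: cSUP_mono bdd_aboveI2[where M=1])

lemma sup0_upper: "x \<in> P \<Longrightarrow> (\<And>x. x \<in> P \<Longrightarrow> f x \<le> 1) \<Longrightarrow> f x \<le> sup0 (f ` P)"
  unfolding sup0_def by (auto intro!: cSUP_upper bdd_aboveI2[where M=1])

lemma sup0_least: "(\<And>x. x \<in> P \<Longrightarrow> f x \<le> c) \<Longrightarrow> 0 \<le> c \<Longrightarrow> sup0 (f ` P) \<le> c"
  unfolding sup0_def by (auto intro!: cSUP_least)


definition coupling_cost :: "('x \<Rightarrow> 'x \<Rightarrow> real) \<Rightarrow> ('x \<times> 'x) pmf \<Rightarrow> real" where
  "coupling_cost d \<omega> = measure_pmf.expectation \<omega> (\<lambda>(t, t'). d t t')"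

lemma kantorovich_eq: "kantorovich d \<pi> \<pi>' = (INF \<omega>\<in>couplings \<pi> \<pi>'. coupling_cost d \<omega>)"
  by (simp add: kantorovich_def coupling_cost_def)

lemma pair_pmf_coupling: "pair_pmf \<pi> \<pi>' \<in> couplings \<pi> \<pi>'"
  by (simp add: couplings_def map_fst_pair_pmf map_snd_pair_pmf)

lemma unit_valuedD: "unit_valued d \<Longrightarrow> 0 \<le> d x y \<and> d x y \<le> 1"
  by (simp add: unit_valued_def)

lemma coupling_cost_range: "unit_valued d \<Longrightarrow> 0 \<le> coupling_cost d \<omega> \<and> coupling_cost d \<omega> \<le> 1"
  unfolding coupling_cost_def
  by (rule expectation_unit_range) (auto dest: unit_valuedD split: prod.splits)

lemma kantorovich_le_cost:
  assumes "unit_valued d" "\<omega> \<in> couplings \<pi> \<pi>'"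
  shows "kantorovich d \<pi> \<pi>' \<le> coupling_cost d \<omega>"
  unfolding kantorovich_eq using assms coupling_cost_range
  by (intro cINF_lower bdd_belowI2[where m=0]) auto

lemma kantorovich_range:
  assumes "unit_valued d"
  shows "0 \<le> kantorovich d \<pi> \<pi>' \<and> kantorovich d \<pi> \<pi>' \<le> 1"
proof
  show "0 \<le> kantorovich d \<pi> \<pi>'"
    unfolding kantorovich_eq using pair_pmf_coupling coupling_cost_range[OF assms]
    by (intro cINF_greatest) auto
  show "kantorovich d \<pi> \<pi>' \<le> 1"
    using kantorovich_le_cost[OF assms pair_pmf_coupling] coupling_cost_range[OF assms]
    by (meson order_trans)
qed

lemma kantorovich_mono:
  assumes d1: "unit_valued d1" and d2: "unit_valued d2" and "d1 \<le> d2"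
  shows "kantorovich d1 \<pi> \<pi>' \<le> kantorovich d2 \<pi> \<pi>'"
  unfolding kantorovich_eq
proof (rule cINF_mono)
  show "couplings \<pi> \<pi>' \<noteq> {}" using pair_pmf_coupling by blast
  show "bdd_below (coupling_cost d1 ` couplings \<pi> \<pi>')"
    using coupling_cost_range[OF d1] by (intro bdd_belowI2[where m=0]) auto
  fix \<omega> assume "\<omega> \<in> couplings \<pi> \<pi>'"
  moreover have "coupling_cost d1 \<omega> \<le> coupling_cost d2 \<omega>"
    unfolding coupling_cost_def using assms unit_valuedD[OF d1] unit_valuedD[OF d2]
    by (intro expectation_mono_bounded[where B=1 and C=1]) (auto simp: le_fun_def split: prod.splits)
  ultimately show "\<exists>\<omega>'\<in>couplings \<pi> \<pi>'. coupling_cost d1 \<omega>' \<le> coupling_cost d2 \<omega>" by blast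
qed

lemma hausdorff_range:
  assumes "\<And>x y. 0 \<le> dh x y \<and> dh x y \<le> 1"
  shows "0 \<le> hausdorff dh P Q \<and> hausdorff dh P Q \<le> 1"
  unfolding hausdorff_def using assms
  by (auto intro!: sup0_range inf1_range simp: max_def)

lemma hausdorff_mono:
  assumes le: "\<And>x y. 0 \<le> dh x y \<and> dh x y \<le> dh' x y" and le1: "\<And>x y. dh' x y \<le> 1"
  shows "hausdorff dh P Q \<le> hausdorff dh' P Q"
proof -
  have inf_le: "inf1 (dh p ` S) \<le> inf1 (dh' p ` S)" for p S
    by (rule inf1_mono) (use le in auto)
  have inf_le1: "inf1 (dh' p ` S) \<le> 1" for p S
    using inf1_range[of S "dh' p"] le le1 by (meson order_trans)
  show ?thesis
    unfolding hausdorff_def by (intro max.mono sup0_mono conjI inf_le inf_le1)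
qed

lemma hausdorff_singleton: "hausdorff dh {x} {y} = max (dh x y) (dh y x)"
  by (simp add: hausdorff_def inf1_def sup0_def)

lemma bisim_op_unit_valued:
  assumes "unit_valued d"
  shows "unit_valued (bisim_op d)"
  unfolding unit_valued_def bisim_op_def
  using kantorovich_range[OF assms] by (auto intro!: sup0_range hausdorff_range)

lemma bisim_op_mono:
  assumes d1: "unit_valued d1" and d2: "unit_valued d2" and "d1 \<le> d2"
  shows "bisim_op d1 \<le> bisim_op d2"
proof (intro le_funI)
  fix t t' :: "'a proc"
  have "hausdorff (kantorovich d1) (der t a) (der t' a) \<le> hausdorff (kantorovich d2) (der t a) (der t' a)"
    for a using kantorovich_range[OF d1] kantorovich_range[OF d2] kantorovich_mono[OF assms]
    by (intro hausdorff_mono) auto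
  moreover have "hausdorff (kantorovich d2) (der t a) (der t' a) \<le> 1" for a
    using hausdorff_range kantorovich_range[OF d2] by blast
  ultimately show "bisim_op d1 t t' \<le> bisim_op d2 t t'"
    unfolding bisim_op_def by (intro sup0_mono) auto
qed

lemma hausdorff_sym: "hausdorff dh P Q = hausdorff dh Q P"
  unfolding hausdorff_def by (rule max.commute)

lemma bisim_op_sym: "bisim_op d t t' = bisim_op d t' t"
  unfolding bisim_op_def hausdorff_sym[of _ "der t _"] ..


section \<open>The bisimilarity metric is the least pre-fixed point\<close>

text \<open>Knaster-Tarski construction: the pointwise infimum of all unit-valued pre-fixed
  points of bisim_op.\<close>
definition least_prefix_dist :: "'a proc \<Rightarrow> 'a proc \<Rightarrow> real" where
  "least_prefix_dist t t' = Inf ((\<lambda>d. d t t') ` {d. unit_valued d \<and> bisim_op d \<le> d})"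

lemma one_prefix_point: "(\<lambda>_ _. 1) \<in> {d. unit_valued d \<and> bisim_op d \<le> d}"
proof -
  have uv: "unit_valued (\<lambda>_ _. 1)" by (simp add: unit_valued_def)
  then show ?thesis
    using bisim_op_unit_valued[OF uv] by (auto simp: unit_valued_def le_fun_def)
qed

lemma least_prefix_dist_le: "unit_valued d \<Longrightarrow> bisim_op d \<le> d \<Longrightarrow> least_prefix_dist \<le> d"
  unfolding le_fun_def least_prefix_dist_def
  by (auto intro!: cINF_lower bdd_belowI2[where m=0] simp: unit_valued_def)

lemma least_prefix_dist_unit_valued: "unit_valued least_prefix_dist"
  unfolding unit_valued_def
proof (intro allI conjI)
  fix t t' :: "'a proc"
  show "0 \<le> least_prefix_dist t t'"
    unfolding least_prefix_dist_def
    by (rule cINF_greatest) (use one_prefix_point in blast, simp add: unit_valued_def)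
  show "least_prefix_dist t t' \<le> 1"
    using least_prefix_dist_le one_prefix_point by (auto simp: le_fun_def)
qed

lemma least_prefix_dist_prefix: "bisim_op least_prefix_dist \<le> least_prefix_dist"
proof (rule le_funI, rule le_funI)
  fix t t' :: "'a proc"
  show "bisim_op least_prefix_dist t t' \<le> least_prefix_dist t t'"
    unfolding least_prefix_dist_def[of t t']
  proof (rule cINF_greatest)
    show "{d. unit_valued d \<and> bisim_op d \<le> d} \<noteq> {}" using one_prefix_point by blast
    fix d :: "'a proc \<Rightarrow> 'a proc \<Rightarrow> real" assume d: "d \<in> {d. unit_valued d \<and> bisim_op d \<le> d}"
    then have "bisim_op least_prefix_dist \<le> bisim_op d"
      using least_prefix_dist_le least_prefix_dist_unit_valued by (blast intro: bisim_op_mono)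
    also have "\<dots> \<le> d" using d by blast
    finally show "bisim_op least_prefix_dist t t' \<le> d t t'" by (simp add: le_fun_def)
  qed
qed

lemma least_prefix_dist_fixpoint: "bisim_op least_prefix_dist = least_prefix_dist"
proof (rule antisym[OF least_prefix_dist_prefix])
  have uv: "unit_valued (bisim_op least_prefix_dist)"
    by (rule bisim_op_unit_valued[OF least_prefix_dist_unit_valued])
  show "least_prefix_dist \<le> bisim_op least_prefix_dist"
    by (rule least_prefix_dist_le[OF uv bisim_op_mono[OF uv least_prefix_dist_unit_valued
          least_prefix_dist_prefix]])
qed

lemma bdist_eq_least_prefix_dist: "bdist = least_prefix_dist"
  unfolding bdist_def
proof (rule the_equality)
  show "unit_valued least_prefix_dist \<and> bisim_op least_prefix_dist = least_prefix_dist \<and>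
        (\<forall>d'. unit_valued d' \<and> bisim_op d' = d' \<longrightarrow> least_prefix_dist \<le> d')"
    using least_prefix_dist_unit_valued least_prefix_dist_fixpoint least_prefix_dist_le
    by (metis order_refl)
  fix d assume "unit_valued d \<and> bisim_op d = d \<and>
                (\<forall>d'. unit_valued d' \<and> bisim_op d' = d' \<longrightarrow> d \<le> d')"
  then show "d = least_prefix_dist"
    using least_prefix_dist_unit_valued least_prefix_dist_fixpoint least_prefix_dist_le[of d]
    by (intro antisym) auto
qed

lemma bdist_unit_valued: "unit_valued bdist"
  and bdist_fixpoint: "bisim_op bdist = bdist"
  and bdist_least: "unit_valued d \<Longrightarrow> bisim_op d \<le> d \<Longrightarrow> bdist \<le> d"
  using least_prefix_dist_unit_valued least_prefix_dist_fixpoint least_prefix_dist_le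
  by (auto simp: bdist_eq_least_prefix_dist)

lemma bdist_range: "0 \<le> bdist p q \<and> bdist p q \<le> 1"
  using bdist_unit_valued by (rule unit_valuedD)

lemma bdist_sym: "bdist t t' = bdist t' t"
  using bisim_op_sym[of bdist t t'] unfolding bdist_fixpoint .


section \<open>Compositionality of the liftings\<close>

text \<open>On prefix distributions the Kantorovich lifting is bounded by the weighted sum of
  the distances of corresponding continuations (the diagonal coupling).\<close>
lemma kantorovich_pmf_of_list:
  assumes uv: "unit_valued d" and wf: "pmf_of_list_wf ws"
  shows "kantorovich d (pmf_of_list (map (\<lambda>x. (f (fst x), snd x)) ws))
                       (pmf_of_list (map (\<lambda>x. (g (fst x), snd x)) ws))
        \<le> (\<Sum>x\<leftarrow>ws. snd x * d (f (fst x)) (g (fst x)))"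
proof -
  define L where "L = map (\<lambda>x. ((f (fst x), g (fst x)), snd x)) ws"
  have wfL: "pmf_of_list_wf L" using wf by (auto simp: L_def pmf_of_list_wf_def comp_def)
  have "pmf_of_list L \<in> couplings (pmf_of_list (map (\<lambda>x. (f (fst x), snd x)) ws))
                                   (pmf_of_list (map (\<lambda>x. (g (fst x), snd x)) ws))"
    unfolding couplings_def using map_pmf_of_list[OF wfL, of fst] map_pmf_of_list[OF wfL, of snd]
    by (simp add: L_def comp_def)
  then have "kantorovich d (pmf_of_list (map (\<lambda>x. (f (fst x), snd x)) ws))
                           (pmf_of_list (map (\<lambda>x. (g (fst x), snd x)) ws))
           \<le> coupling_cost d (pmf_of_list L)"
    by (rule kantorovich_le_cost[OF uv])
  also have "\<dots> = (\<Sum>x\<leftarrow>ws. snd x * d (f (fst x)) (g (fst x)))"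
    unfolding coupling_cost_def expectation_pmf_of_list[OF wfL] by (simp add: L_def comp_def)
  finally show ?thesis .
qed

lemma par_coupling:
  assumes "\<omega>1 \<in> couplings \<pi>1 \<pi>1'" "\<omega>2 \<in> couplings \<pi>2 \<pi>2'"
  shows "map_pmf (\<lambda>((p1, q1), (p2, q2)). (PPar B p1 p2, PPar B q1 q2)) (pair_pmf \<omega>1 \<omega>2)
         \<in> couplings (par_pmf B \<pi>1 \<pi>2) (par_pmf B \<pi>1' \<pi>2')"
  using assms unfolding couplings_def par_pmf_def
  by (auto simp: map_pmf_comp map_pair[symmetric] case_prod_unfold)

lemma kantorovich_par_pmf:
  assumes uv: "unit_valued d"
    and par: "\<And>p1 p2 q1 q2. d (PPar B p1 p2) (PPar B q1 q2) \<le> por (d p1 q1) (d p2 q2)"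
  shows "kantorovich d (par_pmf B \<pi>1 \<pi>2) (par_pmf B \<pi>1' \<pi>2')
       \<le> por (kantorovich d \<pi>1 \<pi>1') (kantorovich d \<pi>2 \<pi>2')"
  unfolding kantorovich_eq[of d \<pi>1] kantorovich_eq[of d \<pi>2]
proof (rule le_por_Inf)
  show "coupling_cost d ` couplings \<pi>1 \<pi>1' \<noteq> {}" "coupling_cost d ` couplings \<pi>2 \<pi>2' \<noteq> {}"
    using pair_pmf_coupling by blast+
  show "\<And>a. a \<in> coupling_cost d ` couplings \<pi>1 \<pi>1' \<Longrightarrow> 0 \<le> a \<and> a \<le> 1"
       "\<And>b. b \<in> coupling_cost d ` couplings \<pi>2 \<pi>2' \<Longrightarrow> 0 \<le> b \<and> b \<le> 1"
    using coupling_cost_range[OF uv] by auto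
  fix a b
  assume "a \<in> coupling_cost d ` couplings \<pi>1 \<pi>1'" "b \<in> coupling_cost d ` couplings \<pi>2 \<pi>2'"
  then obtain \<omega>1 \<omega>2 where \<omega>1: "\<omega>1 \<in> couplings \<pi>1 \<pi>1'" "a = coupling_cost d \<omega>1"
    and \<omega>2: "\<omega>2 \<in> couplings \<pi>2 \<pi>2'" "b = coupling_cost d \<omega>2" by blast
  let ?\<omega> = "map_pmf (\<lambda>((p1, q1), (p2, q2)). (PPar B p1 p2, PPar B q1 q2)) (pair_pmf \<omega>1 \<omega>2)"
  have d01: "0 \<le> d x y \<and> d x y \<le> 1" for x y using unit_valuedD[OF uv] .
  have "kantorovich d (par_pmf B \<pi>1 \<pi>2) (par_pmf B \<pi>1' \<pi>2') \<le> coupling_cost d ?\<omega>"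
    by (rule kantorovich_le_cost[OF uv par_coupling[OF \<omega>1(1) \<omega>2(1)]])
  also have "\<dots> = measure_pmf.expectation (pair_pmf \<omega>1 \<omega>2)
                    (\<lambda>((p1, q1), (p2, q2)). d (PPar B p1 p2) (PPar B q1 q2))"
    unfolding coupling_cost_def by (simp add: case_prod_unfold)
  also have "\<dots> \<le> measure_pmf.expectation (pair_pmf \<omega>1 \<omega>2)
                    (\<lambda>(x, y). por ((\<lambda>(p, q). d p q) x) ((\<lambda>(p, q). d p q) y))"
    using par d01 por_range[OF conjunct1[OF d01] conjunct2[OF d01] conjunct1[OF d01] conjunct2[OF d01]]
    by (intro expectation_mono_bounded[where B=1 and C=1]) (auto simp: abs_le_iff split: prod.splits)
  also have "\<dots> = por a b"
    unfolding \<omega>1(2) \<omega>2(2) coupling_cost_def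
    by (rule expectation_pair_por) (auto simp: d01 split: prod.splits)
  finally show "kantorovich d (par_pmf B \<pi>1 \<pi>2) (par_pmf B \<pi>1' \<pi>2') \<le> por a b" .
qed

lemma half_hausdorff_product:
  fixes dh :: "'x \<Rightarrow> 'x \<Rightarrow> real"
  assumes rng: "\<And>x y. 0 \<le> dh x y \<and> dh x y \<le> 1"
    and h1: "sup0 ((\<lambda>p. inf1 (dh p ` Q1)) ` P1) \<le> b1" "b1 < 1"
    and h2: "sup0 ((\<lambda>p. inf1 (dh p ` Q2)) ` P2) \<le> b2" "b2 < 1"
    and comb: "\<And>p1 p2 q1 q2. dh (c p1 p2) (c q1 q2) \<le> por (dh p1 q1) (dh p2 q2)"
  shows "sup0 ((\<lambda>p. inf1 (dh p ` (case_prod c ` (Q1 \<times> Q2)))) ` (case_prod c ` (P1 \<times> P2)))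
         \<le> por b1 b2"
proof (rule sup0_least)
  have "0 \<le> sup0 ((\<lambda>p. inf1 (dh p ` Q1)) ` P1)" "0 \<le> sup0 ((\<lambda>p. inf1 (dh p ` Q2)) ` P2)"
    using rng by (auto intro!: conjunct1[OF sup0_range] inf1_range)
  then have b0: "0 \<le> b1" "0 \<le> b2" using h1 h2 by linarith+
  then show "0 \<le> por b1 b2" using h1 h2 by (simp add: por_range)
  fix p assume "p \<in> case_prod c ` (P1 \<times> P2)"
  then obtain p1 p2 where p: "p = c p1 p2" "p1 \<in> P1" "p2 \<in> P2" by auto
  have i1: "inf1 (dh p1 ` Q1) \<le> b1"
    using sup0_upper[of p1 P1 "\<lambda>p. inf1 (dh p ` Q1)"] p(2) h1 rng
    by (meson inf1_range order_trans)
  have i2: "inf1 (dh p2 ` Q2) \<le> b2"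
    using sup0_upper[of p2 P2 "\<lambda>p. inf1 (dh p ` Q2)"] p(3) h2 rng
    by (meson inf1_range order_trans)
  have ne1: "Q1 \<noteq> {}" and ne2: "Q2 \<noteq> {}" using i1 i2 h1 h2 by (auto simp: inf1_def)
  have "Inf (dh p ` case_prod c ` (Q1 \<times> Q2)) \<le> por (Inf (dh p1 ` Q1)) (Inf (dh p2 ` Q2))"
  proof (rule le_por_Inf)
    fix a b assume "a \<in> dh p1 ` Q1" "b \<in> dh p2 ` Q2"
    then obtain q1 q2 where q: "q1 \<in> Q1" "q2 \<in> Q2" "a = dh p1 q1" "b = dh p2 q2" by auto
    have "Inf (dh p ` case_prod c ` (Q1 \<times> Q2)) \<le> dh p (c q1 q2)"
      using q rng by (intro cInf_lower bdd_belowI2[where m=0]) auto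
    also have "\<dots> \<le> por a b" using comb q p by simp
    finally show "Inf (dh p ` case_prod c ` (Q1 \<times> Q2)) \<le> por a b" .
  qed (use ne1 ne2 rng in auto)
  also have "\<dots> \<le> por b1 b2"
    using i1 i2 ne1 ne2 h1 h2 by (intro por_mono) (auto simp: inf1_def)
  finally show "inf1 (dh p ` case_prod c ` (Q1 \<times> Q2)) \<le> por b1 b2"
    using ne1 ne2 by (simp add: inf1_def)
qed

lemma hausdorff_product:
  fixes dh :: "'x \<Rightarrow> 'x \<Rightarrow> real"
  assumes "\<And>x y. 0 \<le> dh x y \<and> dh x y \<le> 1"
    and "hausdorff dh P1 Q1 \<le> b1" "b1 < 1"
    and "hausdorff dh P2 Q2 \<le> b2" "b2 < 1"
    and "\<And>p1 p2 q1 q2. dh (c p1 p2) (c q1 q2) \<le> por (dh p1 q1) (dh p2 q2)"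
  shows "hausdorff dh (case_prod c ` (P1 \<times> P2)) (case_prod c ` (Q1 \<times> Q2)) \<le> por b1 b2"
  unfolding hausdorff_def max.bounded_iff
  using assms by (auto simp: hausdorff_def intro!: half_hausdorff_product[where dh=dh and c=c])


lemma der_nil: "der PNil a = {}"
  unfolding der_def by (auto elim: step.cases)

lemma der_pre: "der (PPre b qs) a = (if a = b \<and> wf_weights qs then {pmf_of_list qs} else {})"
  unfolding der_def by (auto elim: step.cases intro: step.pre)

lemma der_par: "der (PPar UNIV p q) a = case_prod (par_pmf UNIV) ` (der p a \<times> der q a)"
  unfolding der_def by (auto elim: step.cases intro: step.sync)

lemma wf_weights_map: "wf_weights (map (\<lambda>x. (f (fst x), snd x)) ws) = wf_weights ws"
  by (auto simp: wf_weights_def comp_def)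

lemma wf_weights_pmf_of_list_wf: "wf_weights ws \<Longrightarrow> pmf_of_list_wf ws"
  by (auto simp: wf_weights_def pmf_of_list_wf_def)


section \<open>Witness trees and the distance they induce\<close>

datatype 'a wtree =
    WLeaf "'a proc" "'a proc"
  | WNil
  | WPre 'a "('a wtree \<times> real) list"
  | WPar "'a wtree" "'a wtree"

fun wleft :: "'a wtree \<Rightarrow> 'a proc" where
  "wleft (WLeaf p q) = p"
| "wleft WNil = PNil"
| "wleft (WPre a ws) = PPre a (map (\<lambda>x. (wleft (fst x), snd x)) ws)"
| "wleft (WPar T U) = PPar UNIV (wleft T) (wleft U)"

fun wright :: "'a wtree \<Rightarrow> 'a proc" where
  "wright (WLeaf p q) = q"
| "wright WNil = PNil"
| "wright (WPre a ws) = PPre a (map (\<lambda>x. (wright (fst x), snd x)) ws)"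
| "wright (WPar T U) = PPar UNIV (wright T) (wright U)"

fun wswap :: "'a wtree \<Rightarrow> 'a wtree" where
  "wswap (WLeaf p q) = WLeaf q p"
| "wswap WNil = WNil"
| "wswap (WPre a ws) = WPre a (map (\<lambda>x. (wswap (fst x), snd x)) ws)"
| "wswap (WPar T U) = WPar (wswap T) (wswap U)"

fun wbound :: "'a wtree \<Rightarrow> real" where
  "wbound (WLeaf p q) = bdist p q"
| "wbound WNil = 0"
| "wbound (WPre a ws) = (\<Sum>x\<leftarrow>ws. snd x * wbound (fst x))"
| "wbound (WPar T U) = por (wbound T) (wbound U)"

fun wvalid :: "'a wtree \<Rightarrow> bool" where
  "wvalid (WLeaf p q) = (bdist p q < 1)"
| "wvalid WNil = True"
| "wvalid (WPre a ws) = (wf_weights ws \<and> (\<forall>x\<in>set ws. wvalid (fst x)))"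
| "wvalid (WPar T U) = (wvalid T \<and> wvalid U)"

text \<open>Swapping the leaves exchanges the two readings and preserves bound and validity;
  needed because the Hausdorff lifting compares derivatives in both directions.\<close>
lemma wswap_props:
  "wleft (wswap T) = wright T \<and> wright (wswap T) = wleft T \<and>
   wbound (wswap T) = wbound T \<and> wvalid (wswap T) = wvalid T"
proof (induction T)
  case (WLeaf p q) then show ?case by (simp add: bdist_sym)
next
  case (WPre a ws)
  then have "\<forall>x\<in>set ws. wleft (wswap (fst x)) = wright (fst x) \<and> wright (wswap (fst x)) = wleft (fst x)
                        \<and> wbound (wswap (fst x)) = wbound (fst x) \<and> wvalid (wswap (fst x)) = wvalid (fst x)"
    by (auto simp: fsts.intros)
  then show ?case by (simp add: comp_def wf_weights_map cong: map_cong)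
qed simp_all

text \<open>Valid trees certify a bound strictly below 1; this is what makes por-bounds
  compose in the Hausdorff lifting.\<close>
lemma wbound_range: "wvalid T \<Longrightarrow> 0 \<le> wbound T \<and> wbound T < 1"
proof (induction T)
  case (WLeaf p q) then show ?case using unit_valuedD[OF bdist_unit_valued, of p q] by simp
next
  case (WPre a ws)
  have w: "ws \<noteq> []" "\<And>x. x \<in> set ws \<Longrightarrow> 0 < snd x" "sum_list (map snd ws) = 1"
    using WPre.prems by (auto simp: wf_weights_def)
  have ih: "\<And>x. x \<in> set ws \<Longrightarrow> 0 \<le> wbound (fst x) \<and> wbound (fst x) < 1"
    using WPre by (auto simp: fsts.intros)
  have "0 \<le> (\<Sum>x\<leftarrow>ws. snd x * wbound (fst x))"
    using w ih by (intro sum_list_nonneg) (fastforce intro: mult_nonneg_nonneg less_imp_le)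
  moreover have "(\<Sum>x\<leftarrow>ws. snd x * wbound (fst x)) < (\<Sum>x\<leftarrow>ws. snd x)"
    using w ih by (intro sum_list_strict_mono) auto
  ultimately show ?case using w by simp
next
  case (WPar T U)
  then show ?case by (auto simp: por_range por_less_one less_imp_le)
qed simp

definition witness_dist :: "'a proc \<Rightarrow> 'a proc \<Rightarrow> real" where
  "witness_dist p q = Inf (insert 1 (wbound ` {T. wvalid T \<and> wleft T = p \<and> wright T = q}))"

lemma witness_dist_bdd: "bdd_below (insert 1 (wbound ` {T. wvalid T \<and> wleft T = p \<and> wright T = q}))"
  using wbound_range by (intro bdd_belowI[where m=0]) fastforce

lemma witness_dist_unit_valued: "unit_valued witness_dist"
  unfolding unit_valued_def witness_dist_def
proof (intro allI conjI)
  fix p q :: "'a proc"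
  show "0 \<le> Inf (insert 1 (wbound ` {T. wvalid T \<and> wleft T = p \<and> wright T = q}))"
    using wbound_range by (intro cInf_greatest) fastforce+
  show "Inf (insert 1 (wbound ` {T. wvalid T \<and> wleft T = p \<and> wright T = q})) \<le> 1"
    by (rule cInf_lower[OF _ witness_dist_bdd]) simp
qed

lemma witness_dist_le_wbound: "wvalid T \<Longrightarrow> witness_dist (wleft T) (wright T) \<le> wbound T"
  unfolding witness_dist_def by (rule cInf_lower[OF _ witness_dist_bdd]) auto

lemma witness_dist_le_wbound_swapped: "wvalid T \<Longrightarrow> witness_dist (wright T) (wleft T) \<le> wbound T"
  using witness_dist_le_wbound[of "wswap T"] wswap_props[of T] by simp

text \<open>A single leaf witnesses bdist itself, so witness_dist improves on bdist.\<close>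
lemma witness_dist_le_bdist: "witness_dist \<le> bdist"
proof (intro le_funI)
  fix p q :: "'a proc"
  show "witness_dist p q \<le> bdist p q"
  proof (cases "bdist p q < 1")
    case True
    then show ?thesis using witness_dist_le_wbound[of "WLeaf p q"] by simp
  next
    case False
    then show ?thesis using unit_valuedD[OF witness_dist_unit_valued, of p q] by simp
  qed
qed

lemma witness_dist_par:
  "witness_dist (PPar UNIV p1 p2) (PPar UNIV q1 q2) \<le> por (witness_dist p1 q1) (witness_dist p2 q2)"
  unfolding witness_dist_def[of p1] witness_dist_def[of p2]
proof (rule le_por_Inf)
  fix a b
  assume a: "a \<in> insert 1 (wbound ` {T. wvalid T \<and> wleft T = p1 \<and> wright T = q1})"
    and b: "b \<in> insert 1 (wbound ` {T. wvalid T \<and> wleft T = p2 \<and> wright T = q2})"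
  show "witness_dist (PPar UNIV p1 p2) (PPar UNIV q1 q2) \<le> por a b"
  proof (cases "a = 1 \<or> b = 1")
    case True
    have "witness_dist (PPar UNIV p1 p2) (PPar UNIV q1 q2) \<le> 1"
      using unit_valuedD[OF witness_dist_unit_valued] by blast
    with True show ?thesis by (auto simp: por_def)
  next
    case False
    then obtain T U where "wvalid T" "wleft T = p1" "wright T = q1" "a = wbound T"
      and "wvalid U" "wleft U = p2" "wright U = q2" "b = wbound U" using a b by auto
    then show ?thesis using witness_dist_le_wbound[of "WPar T U"] by simp
  qed
qed (use wbound_range in force)+

lemma kantorovich_wpre_le_wbound:
  assumes valid: "wvalid (WPre b ws)"
    and fg: "\<And>T. wvalid T \<Longrightarrow> witness_dist (f T) (g T) \<le> wbound T"
  shows "kantorovich witness_dist (pmf_of_list (map (\<lambda>x. (f (fst x), snd x)) ws))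
                                  (pmf_of_list (map (\<lambda>x. (g (fst x), snd x)) ws)) \<le> wbound (WPre b ws)"
proof -
  have ws: "wf_weights ws" and wt: "\<And>x. x \<in> set ws \<Longrightarrow> wvalid (fst x)"
    using valid by auto
  have pos: "\<And>x. x \<in> set ws \<Longrightarrow> 0 \<le> snd x" using ws by (auto simp: wf_weights_def)
  have "kantorovich witness_dist (pmf_of_list (map (\<lambda>x. (f (fst x), snd x)) ws))
                                 (pmf_of_list (map (\<lambda>x. (g (fst x), snd x)) ws))
      \<le> (\<Sum>x\<leftarrow>ws. snd x * witness_dist (f (fst x)) (g (fst x)))"
    by (rule kantorovich_pmf_of_list[OF witness_dist_unit_valued wf_weights_pmf_of_list_wf[OF ws]])
  also have "\<dots> \<le> wbound (WPre b ws)"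
    using pos wt fg by (auto intro!: sum_list_mono mult_left_mono)
  finally show ?thesis .
qed

lemma hausdorff_der_le_wbound:
  "wvalid T \<Longrightarrow> hausdorff (kantorovich witness_dist) (der (wleft T) a) (der (wright T) a) \<le> wbound T"
proof (induction T)
  case (WLeaf p q)
  have "hausdorff (kantorovich witness_dist) (der p a) (der q a)
      \<le> hausdorff (kantorovich bdist) (der p a) (der q a)"
    using kantorovich_range[OF witness_dist_unit_valued] kantorovich_range[OF bdist_unit_valued]
      kantorovich_mono[OF witness_dist_unit_valued bdist_unit_valued witness_dist_le_bdist]
    by (intro hausdorff_mono) auto
  also have "\<dots> \<le> bisim_op bdist p q"
    unfolding bisim_op_def using kantorovich_range[OF bdist_unit_valued]
    by (intro sup0_upper[where f="\<lambda>a. hausdorff (kantorovich bdist) (der p a) (der q a)"])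
       (auto intro!: conjunct2[OF hausdorff_range])
  finally show ?case by (simp add: bdist_fixpoint)
next
  case WNil then show ?case by (simp add: der_nil hausdorff_def sup0_def)
next
  case (WPre b ws)
  show ?case
  proof (cases "a = b")
    case True
    then show ?thesis using WPre.prems
        kantorovich_wpre_le_wbound[OF WPre.prems witness_dist_le_wbound]
        kantorovich_wpre_le_wbound[OF WPre.prems witness_dist_le_wbound_swapped]
      by (simp add: der_pre wf_weights_map hausdorff_singleton del: wbound.simps)
  next
    case False
    then show ?thesis using wbound_range[OF WPre.prems] by (simp add: der_pre hausdorff_def sup0_def)
  qed
next
  case (WPar T U)
  then have "hausdorff (kantorovich witness_dist)
               (case_prod (par_pmf UNIV) ` (der (wleft T) a \<times> der (wleft U) a))
               (case_prod (par_pmf UNIV) ` (der (wright T) a \<times> der (wright U) a))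
           \<le> por (wbound T) (wbound U)"
    using wbound_range kantorovich_range[OF witness_dist_unit_valued]
    by (intro hausdorff_product kantorovich_par_pmf[OF witness_dist_unit_valued witness_dist_par]) auto
  then show ?case by (simp add: der_par)
qed

lemma witness_dist_prefix_point: "bisim_op witness_dist \<le> witness_dist"
proof (intro le_funI)
  fix p q :: "'a proc"
  show "bisim_op witness_dist p q \<le> witness_dist p q"
    unfolding witness_dist_def[of p q]
  proof (rule cInf_greatest)
    fix x assume "x \<in> insert 1 (wbound ` {T. wvalid T \<and> wleft T = p \<and> wright T = q})"
    then show "bisim_op witness_dist p q \<le> x"
    proof
      assume "x = 1"
      then show ?thesis
        using unit_valuedD[OF bisim_op_unit_valued[OF witness_dist_unit_valued], of p q] by simp
    next
      assume "x \<in> wbound ` {T. wvalid T \<and> wleft T = p \<and> wright T = q}"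
      then obtain T where T: "wvalid T" "wleft T = p" "wright T = q" "x = wbound T" by auto
      show ?thesis
        unfolding bisim_op_def using T hausdorff_der_le_wbound[OF T(1)] wbound_range[OF T(1)]
        by (intro sup0_least) auto
    qed
  qed simp
qed

theorem bdist_le_witness_dist: "bdist p q \<le> witness_dist p q"
  using bdist_least[OF witness_dist_unit_valued witness_dist_prefix_point] unfolding le_fun_def by blast


section \<open>Distance-bounding functions of multiplicities\<close>

text \<open>epow is exponentiation with exponents in enat; the two facts that matter are
  epow c 0 = 1 and additivity of exponents.\<close>

lemma epow_range: "0 \<le> c \<Longrightarrow> c \<le> 1 \<Longrightarrow> 0 \<le> epow c n \<and> epow c n \<le> 1"
  by (cases n) (auto simp: epow_def power_le_one)

lemma epow_0: "epow c 0 = 1" by (simp add: epow_def zero_enat_def)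

lemma epow_1: "epow c 1 = c" by (simp add: epow_def one_enat_def)

lemma epow_add: "epow c (m1 + m2) = epow c m1 * epow c m2"
  by (cases m1; cases m2) (auto simp: epow_def power_add)

lemma dda_range:
  assumes "\<And>x. 0 \<le> e x \<and> e x \<le> 1"
  shows "0 \<le> dda m e \<and> dda m e \<le> 1"
proof -
  have r: "0 \<le> (\<Prod>x\<in>F. epow (1 - e x) (m x)) \<and> (\<Prod>x\<in>F. epow (1 - e x) (m x)) \<le> 1" for F
    using assms epow_range[of "1 - e _"] by (auto intro!: prod_nonneg prod_le_1)
  have "0 \<le> (INF F\<in>{F. finite F}. \<Prod>x\<in>F. epow (1 - e x) (m x))"
    using r by (intro cINF_greatest) auto
  moreover have "(INF F\<in>{F. finite F}. \<Prod>x\<in>F. epow (1 - e x) (m x)) \<le> (\<Prod>x\<in>{}. epow (1 - e x) (m x))"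
    using r by (intro cINF_lower bdd_belowI2[where m=0]) auto
  ultimately show ?thesis unfolding dda_def by simp
qed

lemma dda_finite_support:
  assumes S: "finite S" "\<And>x. x \<notin> S \<Longrightarrow> m x = 0" and e: "\<And>x. 0 \<le> e x \<and> e x \<le> 1"
  shows "dda m e = 1 - (\<Prod>x\<in>S. epow (1 - e x) (m x))"
proof -
  let ?g = "\<lambda>x. epow (1 - e x) (m x)"
  have r: "0 \<le> ?g x \<and> ?g x \<le> 1" for x using e epow_range[of "1 - e x"] by auto
  have "prod ?g S \<le> prod ?g F" if F: "finite F" for F
  proof -
    have "prod ?g S = prod ?g (S \<inter> F) * prod ?g (S - F)"
      using S(1) by (rule prod.Int_Diff)
    also have "\<dots> \<le> prod ?g (S \<inter> F)"
      using r by (intro mult_right_le_one_le prod_le_1 prod_nonneg) auto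
    also have "\<dots> = prod ?g (F \<inter> S) * prod ?g (F - S)"
      using S(2) by (simp add: Int_commute epow_0)
    also have "\<dots> = prod ?g F"
      using F by (rule prod.Int_Diff[symmetric])
    finally show ?thesis .
  qed
  then have "(INF F\<in>{F. finite F}. prod ?g F) = prod ?g S"
    using r S by (intro antisym cINF_lower cINF_greatest bdd_belowI2[where m=0] prod_nonneg) auto
  then show ?thesis unfolding dda_def by simp
qed

lemma dda_add:
  assumes f1: "finite {x. m1 x \<noteq> 0}" and f2: "finite {x. m2 x \<noteq> 0}"
    and e: "\<And>x. 0 \<le> e x \<and> e x \<le> 1"
  shows "dda (\<lambda>x. m1 x + m2 x) e = por (dda m1 e) (dda m2 e)"
proof -
  let ?S = "{x. m1 x \<noteq> 0} \<union> {x. m2 x \<noteq> 0}"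
  have fS: "finite ?S" using f1 f2 by simp
  have "dda (\<lambda>x. m1 x + m2 x) e = 1 - (\<Prod>x\<in>?S. epow (1 - e x) (m1 x + m2 x))"
    and "dda m1 e = 1 - (\<Prod>x\<in>?S. epow (1 - e x) (m1 x))"
    and "dda m2 e = 1 - (\<Prod>x\<in>?S. epow (1 - e x) (m2 x))"
    by (rule dda_finite_support[OF fS _ e]; auto)+
  then show ?thesis by (simp add: por_def epow_add prod.distrib)
qed

lemma pmf_of_list_wf_sem:
  "wf_weights qs \<Longrightarrow> pmf_of_list_wf (map (\<lambda>p. (sem (fst p), snd p)) qs)"
  by (auto simp: wf_weights_def pmf_of_list_wf_def comp_def)

lemma sem_finite_support: "wf_tm t \<Longrightarrow> m \<in> set_pmf (sem t) \<Longrightarrow> finite {x. m x \<noteq> 0}"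
proof (induction t arbitrary: m)
  case (TVar v)
  then have "{x. m x \<noteq> 0} \<subseteq> {v}" by auto
  then show ?case by (rule finite_subset) simp
next
  case (TPre a qs)
  have wf: "pmf_of_list_wf (map (\<lambda>p. (sem (fst p), snd p)) qs)"
    using TPre.prems(1) by (simp add: pmf_of_list_wf_sem)
  obtain M where M: "M \<in> set_pmf (pmf_of_list (map (\<lambda>p. (sem (fst p), snd p)) qs))" "m \<in> set_pmf M"
    using TPre.prems(2) by auto
  then obtain p where "p \<in> set qs" "M = sem (fst p)"
    using set_pmf_of_list[OF wf] by auto
  then show ?case using TPre.IH[of p "fst p" m] TPre.prems M(2) by (auto simp: fsts.intros)
next
  case (TPar B t u)
  then obtain m1 m2 where m: "m = (\<lambda>x. m1 x + m2 x)" "m1 \<in> set_pmf (sem t)" "m2 \<in> set_pmf (sem u)"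
    by auto
  have "{x. m x \<noteq> 0} \<subseteq> {x. m1 x \<noteq> 0} \<union> {x. m2 x \<noteq> 0}" using m(1) by auto
  then show ?case using TPar m by (meson finite_UnI finite_subset wf_tm.simps(5))
qed simp_all

lemma pda_var: "(\<And>x. 0 \<le> e x \<and> e x \<le> 1) \<Longrightarrow> pda (sem (TVar x)) e = e x"
  using dda_finite_support[of "{x}" "\<lambda>y. if y = x then 1 else 0" e]
  by (simp add: pda_def epow_1)

lemma pda_nil: "(\<And>x. 0 \<le> e x \<and> e x \<le> 1) \<Longrightarrow> pda (sem TNil) e = 0"
  using dda_finite_support[of "{}" "\<lambda>_. 0" e] by (simp add: pda_def)

lemma pda_pre:
  assumes "wf_weights qs" and e: "\<And>x. 0 \<le> e x \<and> e x \<le> 1"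
  shows "pda (sem (TPre a qs)) e = (\<Sum>p\<leftarrow>qs. snd p * pda (sem (fst p)) e)"
proof -
  have "\<bar>dda m e\<bar> \<le> 1" for m using dda_range[OF e, of m] by simp
  then have "pda (sem (TPre a qs)) e
           = measure_pmf.expectation (pmf_of_list (map (\<lambda>p. (sem (fst p), snd p)) qs)) (\<lambda>M. pda M e)"
    unfolding pda_def sem.simps by (subst expectation_bind_pmf) simp_all
  then show ?thesis
    by (simp add: expectation_pmf_of_list[OF pmf_of_list_wf_sem[OF assms(1)]] comp_def)
qed

lemma pda_par:
  assumes "wf_tm t" "wf_tm u" and e: "\<And>x. 0 \<le> e x \<and> e x \<le> 1"
  shows "pda (sem (TPar B t u)) e = por (pda (sem t) e) (pda (sem u) e)"
proof -
  have "pda (sem (TPar B t u)) e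
      = measure_pmf.expectation (pair_pmf (sem t) (sem u)) (\<lambda>(m1, m2). dda (\<lambda>x. m1 x + m2 x) e)"
    unfolding pda_def sem.simps integral_map_pmf by (simp add: case_prod_unfold)
  also have "\<dots> = measure_pmf.expectation (pair_pmf (sem t) (sem u)) (\<lambda>(m1, m2). por (dda m1 e) (dda m2 e))"
  proof (rule integral_cong_AE)
    have "dda (\<lambda>x. m1 x + m2 x) e = por (dda m1 e) (dda m2 e)"
      if "m1 \<in> set_pmf (sem t)" "m2 \<in> set_pmf (sem u)" for m1 m2
      using dda_add[OF sem_finite_support[OF assms(1) that(1)]
                       sem_finite_support[OF assms(2) that(2)] e] .
    then show "AE z in measure_pmf (pair_pmf (sem t) (sem u)).
            (\<lambda>(m1, m2). dda (\<lambda>x. m1 x + m2 x) e) z = (\<lambda>(m1, m2). por (dda m1 e) (dda m2 e)) z"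
      by (auto simp: AE_measure_pmf_iff)
  qed simp_all
  also have "\<dots> = por (pda (sem t) e) (pda (sem u) e)"
    unfolding pda_def by (rule expectation_pair_por; intro dda_range e)
  finally show ?thesis .
qed


text \<open>The witness tree of a term t under the substitutions s1 and s2 (choice, which
  does not occur in probabilistic process terms, is mapped to an arbitrary tree).\<close>
fun witness :: "('v \<Rightarrow> 'a proc) \<Rightarrow> ('v \<Rightarrow> 'a proc) \<Rightarrow> ('a, 'v) tm \<Rightarrow> 'a wtree" where
  "witness s1 s2 (TVar x) = WLeaf (s1 x) (s2 x)"
| "witness s1 s2 TNil = WNil"
| "witness s1 s2 (TPre a qs) = WPre a (map (\<lambda>p. (witness s1 s2 (fst p), snd p)) qs)"
| "witness s1 s2 (TCho t u) = WNil"
| "witness s1 s2 (TPar B t u) = WPar (witness s1 s2 t) (witness s1 s2 u)"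

lemma witness_processes:
  "ppt t \<Longrightarrow> wleft (witness s1 s2 t) = subst s1 t \<and> wright (witness s1 s2 t) = subst s2 t"
proof (induction t)
  case (TPre a qs)
  then have "\<forall>p\<in>set qs. wleft (witness s1 s2 (fst p)) = subst s1 (fst p)
                        \<and> wright (witness s1 s2 (fst p)) = subst s2 (fst p)"
    by (auto simp: fsts.intros)
  then show ?case by (simp add: comp_def)
qed auto

lemma witness_valid: "wf_tm t \<Longrightarrow> (\<forall>x. bdist (s1 x) (s2 x) < 1) \<Longrightarrow> wvalid (witness s1 s2 t)"
  by (induction t) (auto simp: comp_def wf_weights_map fsts.intros)

lemma witness_wbound:
  assumes "ppt t" "wf_tm t"
  shows "wbound (witness s1 s2 t) = pda (sem t) (\<lambda>x. bdist (s1 x) (s2 x))"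
  using assms
proof (induction t)
  case (TVar x)
  show ?case by (subst pda_var) (use bdist_range in auto)
next
  case TNil
  show ?case by (subst pda_nil) (use bdist_range in auto)
next
  case (TPre a qs)
  then have "wbound (witness s1 s2 (TPre a qs))
           = (\<Sum>p\<leftarrow>qs. snd p * pda (sem (fst p)) (\<lambda>x. bdist (s1 x) (s2 x)))"
    by (simp add: comp_def fsts.intros cong: map_cong)
  also have "\<dots> = pda (sem (TPre a qs)) (\<lambda>x. bdist (s1 x) (s2 x))"
    by (rule pda_pre[symmetric]) (use TPre.prems bdist_range in auto)
  finally show ?case .
next
  case (TPar B t u)
  then show ?case by (subst pda_par) (use bdist_range in auto)
qed simp


theorem proposition3:
  fixes t :: "('a::countable, 'v::countable) tm"
    and \<sigma>1 \<sigma>2 :: "'v \<Rightarrow> 'a proc"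
  assumes "infinite (UNIV :: 'v set)"
    and "ppt t" and "wf_tm t"
    and "\<forall>x. wf_proc (\<sigma>1 x)" and "\<forall>x. wf_proc (\<sigma>2 x)"
    and "\<forall>x. bdist (\<sigma>1 x) (\<sigma>2 x) < 1"
  shows "bdist (subst \<sigma>1 t) (subst \<sigma>2 t) \<le> pda (sem t) (\<lambda>x. bdist (\<sigma>1 x) (\<sigma>2 x))"
proof -
  let ?T = "witness \<sigma>1 \<sigma>2 t"
  have "bdist (subst \<sigma>1 t) (subst \<sigma>2 t) = bdist (wleft ?T) (wright ?T)"
    using witness_processes[OF assms(2)] by simp
  also have "\<dots> \<le> witness_dist (wleft ?T) (wright ?T)"
    by (rule bdist_le_witness_dist)
  also have "\<dots> \<le> wbound ?T"
    by (rule witness_dist_le_wbound[OF witness_valid[OF assms(3,6)]])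
  also have "\<dots> = pda (sem t) (\<lambda>x. bdist (\<sigma>1 x) (\<sigma>2 x))"
    by (rule witness_wbound[OF assms(2,3)])
  finally show ?thesis .
qed

end
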